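(* Let $1\le k<g$ and $v_1,\dots,v_k\in\mathbb{C}^g$ (column vectors). Let $A$ be the $k\times g$ matrix whose $i$-th row is ${}^tv_i$, and define the vector $w=(w_J)_{J\in P^*_{g-k}(X_g)}$ by $w_J=\epsilon(J,X_g\setminus J)\det(A_{X_g\setminus J})$, where $A_{X_g\setminus J}$ is the $k\times k$ submatrix of $A$ with columns in $X_g\setminus J$ and $\epsilon(J,X_g\setminus J)$ is the sign of the permutation rearranging the concatenation of $J$ and $X_g\setminus J$ (each in increasing order) into $(1,2,\dots,g)$. (Thus $w$ is the coordinate vector of $v_1\wedge\dots\wedge v_k$ in the basis $\{\ast_H e_I\}$ given by the Hodge star.) Then \[ v_1{}^tv_1\ast\dots\ast v_k{}^tv_k=\frac{1}{k!}\,w\,{}^tw, \] as matrices indexed by $P^*_{g-k}(X_g)$.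
   Context: Notation: $X_g=\{1,\dots,g\}$; $P^*_k(X)$ is the set of $k$-element subsets of $X$, written increasingly; $M(I,J)$ is the submatrix with rows $I$, columns $J$. Matrices of maps on $\bigwedge^pV$ ($V=\mathbb{C}^g$) are indexed by $P^*_p(X_g)$. For $A$ on $\bigwedge^pV$, $B$ on $\bigwedge^qV$, $p+q\le g$: \[ (A\sqcap B)^H_K=\binom{p+q}{p}^{-1}\sum_{I\in P^*_p(H),\,J\in P^*_p(K)}(-1)^{s_H(I)+s_K(J)}A^I_J\,B^{H\setminus I}_{K\setminus J},\quad H,K\in P^*_{p+q}(X_g), \] with $s_H(I)$ the sum of positions of elements of $I$ within $H$; iterated products are taken left to right. For $g\times g$ matrices $A_1,\dots,A_k$ ($k<g$), the product $A_1\ast\dots\ast A_k$ is the matrix indexed by $P^*_{g-k}(X_g)$ with \[ (A_1\ast\dots\ast A_k)^I_J=(-1)^{|I|_\Sigma+|J|_\Sigma}(A_1\sqcap\dots\sqcap A_k)^{X_g\setminus I}_{X_g\setminus J}, \] where $|I|_\Sigma$ denotes the sum of the elements of $I$. *)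

theory Defs
  imports "Jordan_Normal_Form.Determinant"
begin

text \<open>Matrices of maps on the p-th exterior power are functions indexed by finite subsets
  of {1..g} (increasingly ordered sets). g x g matrices are functions nat => nat => complex
  indexed by 1..g.\<close>

type_synonym smat = "nat set \<Rightarrow> nat set \<Rightarrow> complex"
type_synonym gmat = "nat \<Rightarrow> nat \<Rightarrow> complex"

definition Xg :: "nat \<Rightarrow> nat set" where "Xg g = {1..g}"

definition Pk :: "nat \<Rightarrow> nat set \<Rightarrow> nat set set" where
  "Pk k X = {I. I \<subseteq> X \<and> card I = k}"

definition pos :: "nat set \<Rightarrow> nat \<Rightarrow> nat" where
  "pos H x = card {y\<in>H. y \<le> x}"

definition sH :: "nat set \<Rightarrow> nat set \<Rightarrow> nat" where
  "sH H I = (\<Sum>x\<in>I. pos H x)"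

definition sqcap :: "nat \<Rightarrow> nat \<Rightarrow> smat \<Rightarrow> smat \<Rightarrow> smat" where
  "sqcap p q A B H K = inverse (of_nat ((p + q) choose p)) *
     (\<Sum>I\<in>Pk p H. \<Sum>J\<in>Pk p K.
        (-1) ^ (sH H I + sH K J) * A I J * B (H - I) (K - J))"

text \<open>a g x g matrix viewed as a matrix on the first exterior power (indexed by singletons)\<close>
definition lift1 :: "gmat \<Rightarrow> smat" where
  "lift1 A I J = A (the_elem I) (the_elem J)"

fun iter_sqcap :: "(nat \<Rightarrow> gmat) \<Rightarrow> nat \<Rightarrow> smat" where
  "iter_sqcap As 0 = (\<lambda>I J. if I = {} \<and> J = {} then 1 else 0)"
| "iter_sqcap As (Suc 0) = lift1 (As 1)"
| "iter_sqcap As (Suc (Suc n)) = sqcap (Suc n) 1 (iter_sqcap As (Suc n)) (lift1 (As (Suc (Suc n))))"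

definition star_prod :: "nat \<Rightarrow> (nat \<Rightarrow> gmat) \<Rightarrow> nat \<Rightarrow> smat" where
  "star_prod g As k I J = (-1) ^ (\<Sum>I + \<Sum>J) * iter_sqcap As k (Xg g - I) (Xg g - J)"

definition eps :: "nat \<Rightarrow> nat set \<Rightarrow> int" where
  "eps g J = (let L = sorted_list_of_set J @ sorted_list_of_set (Xg g - J) in
     signof (\<lambda>i. if i \<in> Xg g then L ! (i - 1) else i))"

definition subA :: "(nat \<Rightarrow> nat \<Rightarrow> complex) \<Rightarrow> nat \<Rightarrow> nat set \<Rightarrow> complex mat" where
  "subA v k C = mat k k (\<lambda>(i, j). v (i + 1) (sorted_list_of_set C ! j))"

definition wvec :: "nat \<Rightarrow> (nat \<Rightarrow> nat \<Rightarrow> complex) \<Rightarrow> nat \<Rightarrow> nat set \<Rightarrow> complex" where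
  "wvec g v k J = of_int (eps g J) * det (subA v k (Xg g - J))"

end

theory Submission
  imports Defs
begin

(* By induction on k, the product of the rank-one matrices v_i v_i^T factorises: the sum
   defining the product with the last factor is, term by term, the product of the Laplace
   expansions of the two maximal minors det A_H and det A_K along their last row, the signs
   (-1)^s_H(I) supplying the cofactor signs and the binomial coefficient (k+1 choose k) the
   factorial. It remains to see that eps(J, X_g - J) = (-1)^(|J|_Sigma + 1 + ... + |J|): if J is
   not an initial segment it has a gap j \<notin> J, j+1 \<in> J, and exchanging j and j+1 composes the
   shuffle permutation with one transposition while lowering |J|_Sigma by one. *)

lemma sum_sorted_list_of_set:
  assumes "finite H"
  shows "sum f H = (\<Sum>a<card H. f (sorted_list_of_set H ! a))"
proof -
  have "bij_betw ((!) (sorted_list_of_set H)) {..<card H} H"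
    by (rule bij_betw_nth) (use assms in auto)
  from sum.reindex_bij_betw[OF this, of f] show ?thesis by simp
qed

lemma pos_sorted_list_of_set_nth:
  assumes "finite H" "a < card H"
  shows "pos H (sorted_list_of_set H ! a) = Suc a"
proof -
  let ?hs = "sorted_list_of_set H"
  have len: "length ?hs = card H" using assms by simp
  have "{y\<in>H. y \<le> ?hs ! a} = (!) ?hs ` {..a}"
  proof (intro equalityI subsetI)
    fix y assume y: "y \<in> {y\<in>H. y \<le> ?hs ! a}"
    then have "y \<in> set ?hs" using assms by simp
    then obtain j where j: "j < length ?hs" "y = ?hs ! j" by (auto simp: in_set_conv_nth)
    have "j \<le> a"
    proof (rule ccontr)
      assume "\<not> j \<le> a"
      then have "?hs ! a < ?hs ! j"
        using sorted_wrt_nth_less[OF strict_sorted_list_of_set, of a j] j by simp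
      then show False using y j by simp
    qed
    then show "y \<in> (!) ?hs ` {..a}" using j by auto
  next
    fix y assume "y \<in> (!) ?hs ` {..a}"
    then obtain j where j: "j \<le> a" "y = ?hs ! j" by auto
    have "?hs ! j \<le> ?hs ! a" using sorted_nth_mono[of ?hs j a] j len assms by simp
    moreover have "?hs ! j \<in> H" using j len assms
      by (metis le_less_trans nth_mem set_sorted_list_of_set)
    ultimately show "y \<in> {y\<in>H. y \<le> ?hs ! a}" using j by simp
  qed
  moreover have "inj_on ((!) ?hs) {..a}"
    using inj_on_nth[of ?hs "{..a}"] assms len by simp
  ultimately show ?thesis unfolding pos_def by (simp add: card_image)
qed

lemma sH_self:
  assumes "finite H"
  shows "sH H H = (\<Sum>a<card H. Suc a)"
  unfolding sH_def sum_sorted_list_of_set[OF assms, of "pos H"]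
  using assms by (simp add: pos_sorted_list_of_set_nth)

lemma sH_Diff_nth:
  assumes "finite H" "a < card H"
  shows "sH H (H - {sorted_list_of_set H ! a}) + Suc a = (\<Sum>i<card H. Suc i)"
proof -
  have "sorted_list_of_set H ! a \<in> H"
    using assms by (metis length_sorted_list_of_set nth_mem set_sorted_list_of_set)
  then show ?thesis
    using assms sum.remove[of H _ "pos H"] sH_self[OF assms(1)]
    by (simp add: sH_def pos_sorted_list_of_set_nth)
qed

lemma bij_betw_remove_Pk:
  assumes "finite H" "card H = Suc m"
  shows "bij_betw (\<lambda>x. H - {x}) H (Pk m H)"
proof (rule bij_betwI')
  show "(H - {x} = H - {y}) = (x = y)" if "x \<in> H" "y \<in> H" for x y
    using that by blast
  show "H - {x} \<in> Pk m H" if "x \<in> H" for x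
    using that assms by (simp add: Pk_def)
  show "\<exists>x\<in>H. I = H - {x}" if "I \<in> Pk m H" for I
  proof -
    have I: "I \<subseteq> H" "card I = m" using that by (auto simp: Pk_def)
    then have "card (H - I) = 1" using assms by (simp add: card_Diff_subset finite_subset)
    then obtain x where "H - I = {x}" by (auto simp: card_Suc_eq)
    then show ?thesis using I by blast
  qed
qed

lemma sum_Pk_card_Suc:
  assumes "finite H" "card H = Suc m"
  shows "(\<Sum>I\<in>Pk m H. f I) = (\<Sum>a<Suc m. f (H - {sorted_list_of_set H ! a}))"
proof -
  have "(\<Sum>I\<in>Pk m H. f I) = (\<Sum>x\<in>H. f (H - {x}))"
    using sum.reindex_bij_betw[OF bij_betw_remove_Pk[OF assms], of f] by simp
  also have "\<dots> = (\<Sum>a<Suc m. f (H - {sorted_list_of_set H ! a}))"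
    using sum_sorted_list_of_set[OF assms(1)] assms(2) by simp
  finally show ?thesis .
qed

lemma nth_remove1_nth:
  assumes "distinct xs" "a < length xs" "j < length xs - 1"
  shows "remove1 (xs ! a) xs ! j = xs ! (if j < a then j else Suc j)"
  using assms
proof (induction xs arbitrary: a j)
  case (Cons x xs)
  then show ?case
    by (cases a; cases j) (auto simp: nth_mem)
qed simp

lemma mat_delete_subA:
  assumes "finite H" "card H = Suc m" "a < Suc m"
  shows "mat_delete (subA v (Suc m) H) m a = subA v m (H - {sorted_list_of_set H ! a})"
proof -
  let ?hs = "sorted_list_of_set H"
  have "distinct ?hs" "length ?hs = Suc m" using assms by auto
  then show ?thesis
    unfolding mat_delete_def subA_def sorted_list_of_set_remove[OF assms(1)]
    by (intro eq_matI) (use assms nth_remove1_nth[of ?hs a] in auto)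
qed

lemma det_subA_last_row:
  assumes "finite H" "card H = Suc m"
  shows "det (subA v (Suc m) H) = (\<Sum>a<Suc m. v (Suc m) (sorted_list_of_set H ! a) *
     ((-1)^(m+a) * det (subA v m (H - {sorted_list_of_set H ! a}))))"
proof -
  have sq: "subA v (Suc m) H \<in> carrier_mat (Suc m) (Suc m)" by (simp add: subA_def)
  show ?thesis
    unfolding laplace_expansion_row[OF sq lessI]
    by (intro sum.cong) (use assms mat_delete_subA[OF assms] in \<open>auto simp: cofactor_def subA_def\<close>)
qed

lemma det_subA_singleton: "det (subA v 1 {h}) = v 1 h"
proof -
  have "upper_triangular (subA v 1 {h})" by (simp add: upper_triangular_def subA_def)
  from det_upper_triangular[OF this, of 1] show ?thesis
    by (simp add: subA_def diag_mat_def)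
qed

lemma minus_one_power_eq:
  assumes "even (m + n)"
  shows "(-1::'a::ring_1) ^ m = (-1) ^ n"
  using assms by (simp add: minus_one_power_iff)

lemma iter_sqcap_rank_one:
  assumes "card H = Suc m" "card K = Suc m"
  shows "iter_sqcap (\<lambda>i a b. u i a * w i b) (Suc m) H K
     = inverse (of_nat (fact (Suc m))) * det (subA u (Suc m) H) * det (subA w (Suc m) K)"
  using assms
proof (induction m arbitrary: H K)
  case 0
  then obtain h k where "H = {h}" "K = {k}" by (auto simp: card_Suc_eq)
  then show ?case using det_subA_singleton[of u] det_subA_singleton[of w] by (simp add: lift1_def)
next
  case (Suc m)
  let ?As = "\<lambda>i a b. u i a * w i b" and ?n = "Suc (Suc m)"
  let ?hs = "sorted_list_of_set H" and ?ks = "sorted_list_of_set K"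
  have fin: "finite H" "finite K" using Suc.prems by (auto intro: card_ge_0_finite)
  define Lu where "Lu a = u ?n (?hs ! a) * ((-1)^(Suc m + a) * det (subA u (Suc m) (H - {?hs ! a})))"
    for a
  define Lw where "Lw b = w ?n (?ks ! b) * ((-1)^(Suc m + b) * det (subA w (Suc m) (K - {?ks ! b})))"
    for b
  have summand: "(-1) ^ (sH H (H - {?hs ! a}) + sH K (K - {?ks ! b})) *
        iter_sqcap ?As (Suc m) (H - {?hs ! a}) (K - {?ks ! b}) *
        lift1 (?As ?n) (H - (H - {?hs ! a})) (K - (K - {?ks ! b}))
      = inverse (of_nat (fact (Suc m))) * (Lu a * Lw b)"
    if "a < ?n" "b < ?n" for a b
  proof -
    have mem: "?hs ! a \<in> H" "?ks ! b \<in> K"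
      using that fin Suc.prems by (metis length_sorted_list_of_set nth_mem set_sorted_list_of_set)+
    have sign: "(-1::complex) ^ (sH H (H - {?hs ! a}) + sH K (K - {?ks ! b}))
        = (-1) ^ (Suc m + a) * (-1) ^ (Suc m + b)"
    proof -
      have "sH H (H - {?hs ! a}) + sH K (K - {?ks ! b}) + (Suc m + a + (Suc m + b))
          = 2 * ((\<Sum>i<?n. Suc i) + m)"
        using sH_Diff_nth[OF fin(1), of a] sH_Diff_nth[OF fin(2), of b] that Suc.prems by simp
      then show ?thesis
        unfolding power_add[symmetric] by (intro minus_one_power_eq) (metis dvd_triv_left)
    qed
    have "H - (H - {?hs ! a}) = {?hs ! a}" "K - (K - {?ks ! b}) = {?ks ! b}" using mem by auto
    moreover have "card (H - {?hs ! a}) = Suc m" "card (K - {?ks ! b}) = Suc m"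
      using mem fin Suc.prems by simp_all
    ultimately show ?thesis
      unfolding sign Lu_def Lw_def by (simp add: Suc.IH lift1_def algebra_simps)
  qed
  have "iter_sqcap ?As ?n H K
      = inverse (of_nat ?n) * (\<Sum>a<?n. \<Sum>b<?n. inverse (of_nat (fact (Suc m))) * (Lu a * Lw b))"
    using summand by (simp add: sqcap_def binomial_Suc_n sum_Pk_card_Suc[OF fin(1) Suc.prems(1)]
        sum_Pk_card_Suc[OF fin(2) Suc.prems(2)])
  also have "\<dots> = inverse (of_nat ?n) * inverse (of_nat (fact (Suc m)))
      * (sum Lu {..<?n} * sum Lw {..<?n})"
    by (subst sum_product) (simp only: sum_distrib_left mult.assoc)
  also have "inverse (of_nat ?n) * inverse (of_nat (fact (Suc m))) = inverse (of_nat (fact ?n) :: complex)"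
    by (simp only: fact_Suc[of "Suc m"] of_nat_mult inverse_mult_distrib of_nat_id)
  also have "sum Lu {..<?n} = det (subA u ?n H)"
    unfolding Lu_def det_subA_last_row[OF fin(1) Suc.prems(1)] ..
  also have "sum Lw {..<?n} = det (subA w ?n K)"
    unfolding Lw_def det_subA_last_row[OF fin(2) Suc.prems(2)] ..
  finally show ?case by (simp add: mult.assoc)
qed

definition shuffle_list :: "nat \<Rightarrow> nat set \<Rightarrow> nat list" where
  "shuffle_list g J = sorted_list_of_set J @ sorted_list_of_set (Xg g - J)"

definition shuffle_perm :: "nat \<Rightarrow> nat set \<Rightarrow> nat \<Rightarrow> nat" where
  "shuffle_perm g J i = (if i \<in> Xg g then shuffle_list g J ! (i - 1) else i)"

lemma eps_eq_sign_shuffle_perm: "eps g J = sign (shuffle_perm g J)"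
  unfolding eps_def shuffle_perm_def shuffle_list_def Let_def by simp

lemma
  assumes "J \<subseteq> Xg g"
  shows distinct_shuffle_list: "distinct (shuffle_list g J)"
    and set_shuffle_list: "set (shuffle_list g J) = Xg g"
    and length_shuffle_list: "length (shuffle_list g J) = g"
proof -
  have fin: "finite J" using assms finite_subset by (auto simp: Xg_def)
  show "distinct (shuffle_list g J)" "set (shuffle_list g J) = Xg g"
    using assms fin by (auto simp: shuffle_list_def Xg_def)
  then show "length (shuffle_list g J) = g"
    by (metis distinct_card card_atLeastAtMost diff_Suc_1 Xg_def)
qed

lemma shuffle_perm_permutes:
  assumes "J \<subseteq> Xg g"
  shows "shuffle_perm g J permutes Xg g"
proof (rule bij_imp_permutes)
  let ?L = "shuffle_list g J"
  have "bij_betw (\<lambda>i. i - 1) (Xg g) {..<length ?L}"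
    by (rule bij_betw_byWitness[where f' = Suc]) (auto simp: Xg_def length_shuffle_list[OF assms])
  moreover have "bij_betw ((!) ?L) {..<length ?L} (Xg g)"
    using bij_betw_nth[OF distinct_shuffle_list[OF assms] refl set_shuffle_list[OF assms, symmetric]] .
  ultimately have "bij_betw (\<lambda>i. ?L ! (i - 1)) (Xg g) (Xg g)"
    using bij_betw_trans by (fastforce simp: comp_def)
  then show "bij_betw (shuffle_perm g J) (Xg g) (Xg g)"
    by (rule bij_betw_cong[THEN iffD1, rotated]) (simp add: shuffle_perm_def)
qed (simp add: shuffle_perm_def)

lemma shuffle_perm_initial_segment:
  assumes "m \<le> g"
  shows "shuffle_perm g {1..m} = id"
proof
  fix i
  have "Xg g - {1..m} = {Suc m..<Suc g}" by (auto simp: Xg_def)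
  then have "shuffle_list g {1..m} = [1..<Suc g]"
    using upt_add_eq_append[of 1 "Suc m" "g - m"] assms
    by (simp add: shuffle_list_def atLeastLessThanSuc_atLeastAtMost[symmetric])
  then show "shuffle_perm g {1..m} i = id i"
    by (simp add: shuffle_perm_def Xg_def del: upt_Suc)
qed

lemma sorted_list_of_set_image_transpose:
  assumes "finite S" "\<not> (j \<in> S \<and> Suc j \<in> S)"
  shows "sorted_list_of_set (transpose j (Suc j) ` S)
    = map (transpose j (Suc j)) (sorted_list_of_set S)"
proof (rule sorted_list_of_set_unique[THEN iffD1])
  let ?t = "transpose j (Suc j)"
  have "sorted_wrt (\<lambda>x y. ?t x < ?t y) (sorted_list_of_set S)"
    by (rule sorted_wrt_mono_rel[OF _ strict_sorted_list_of_set])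
      (use assms in \<open>auto simp: transpose_def\<close>)
  then show "sorted_wrt (<) (map ?t (sorted_list_of_set S))
      \<and> set (map ?t (sorted_list_of_set S)) = ?t ` S
      \<and> length (map ?t (sorted_list_of_set S)) = card (?t ` S)"
    using assms by (simp add: sorted_wrt_map card_image)
qed (use assms in simp)

lemma shuffle_list_transpose_gap:
  assumes "J \<subseteq> Xg g" "j \<notin> J" "Suc j \<in> J" "1 \<le> j"
  shows "shuffle_list g J = map (transpose j (Suc j)) (shuffle_list g (insert j (J - {Suc j})))"
proof -
  let ?t = "transpose j (Suc j)" and ?J' = "insert j (J - {Suc j})"
  have X: "j \<in> Xg g" "Suc j \<in> Xg g" using assms by (auto simp: Xg_def)
  have fin: "finite ?J'" using assms finite_subset by (auto simp: Xg_def)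
  have "?t ` (J - {Suc j}) = J - {Suc j}"
    using assms by (auto simp: transpose_def)
  then have tJ: "?t ` ?J' = J" using assms by auto
  have "?t ` (Xg g - ?J') = Xg g - J"
    using permutes_image[OF permutes_swap_id[OF X]] tJ by (simp add: image_set_diff inj_transpose)
  with tJ show ?thesis
    unfolding shuffle_list_def map_append
    using sorted_list_of_set_image_transpose[OF fin, of j]
      sorted_list_of_set_image_transpose[of "Xg g - ?J'" j]
    by (simp add: Xg_def)
qed

lemma shuffle_perm_transpose_gap:
  assumes "J \<subseteq> Xg g" "j \<notin> J" "Suc j \<in> J" "1 \<le> j"
  shows "shuffle_perm g J = transpose j (Suc j) \<circ> shuffle_perm g (insert j (J - {Suc j}))"
proof
  fix i
  have "insert j (J - {Suc j}) \<subseteq> Xg g" "Suc j \<le> g"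
    using assms by (auto simp: Xg_def)
  then show "shuffle_perm g J i = (transpose j (Suc j) \<circ> shuffle_perm g (insert j (J - {Suc j}))) i"
    using shuffle_list_transpose_gap[OF assms] length_shuffle_list
    by (auto simp: shuffle_perm_def Xg_def transpose_def)
qed

lemma not_initial_segment_gap:
  assumes "finite J" "0 \<notin> J" "J \<noteq> {1..card J}"
  shows "\<exists>j\<ge>1. j \<notin> J \<and> Suc j \<in> J"
proof (rule ccontr)
  assume "\<not> ?thesis"
  then have closed: "j \<in> J" if "1 \<le> j" "Suc j \<in> J" for j
    using that by blast
  have "J \<noteq> {}" using assms(3) by auto
  then have max: "Max J \<in> J" using assms(1) by simp
  have down: "Max J - d \<in> J" if "1 \<le> Max J - d" for d
    using that
  proof (induction d)
    case (Suc d)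
    then show ?case using closed[of "Max J - Suc d"] by (simp add: Suc_diff_Suc)
  qed (use max in simp)
  have "J = {1..Max J}"
  proof
    show "{1..Max J} \<subseteq> J"
    proof
      fix x assume "x \<in> {1..Max J}"
      then show "x \<in> J" using down[of "Max J - x"] by simp
    qed
    show "J \<subseteq> {1..Max J}"
      using assms(1,2) by (auto simp: Suc_le_eq) (metis neq0_conv)
  qed
  then show False using assms(3) by (metis card_atLeastAtMost diff_Suc_1)
qed

lemma sign_shuffle_perm:
  assumes "J \<subseteq> Xg g"
  shows "sign (shuffle_perm g J) = (-1::int) ^ (\<Sum>J + \<Sum>{1..card J})"
  using assms
proof (induction "\<Sum>J" arbitrary: J rule: less_induct)
  case less
  have fin: "finite J" using less.prems finite_subset by (auto simp: Xg_def)
  show ?case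
  proof (cases "J = {1..card J}")
    case True
    have "card J \<le> g" using less.prems card_mono[of "Xg g" J] by (simp add: Xg_def)
    then have "shuffle_perm g J = id" using True shuffle_perm_initial_segment by metis
    with True show ?thesis by (simp flip: mult_2)
  next
    case False
    have "0 \<notin> J" using less.prems by (auto simp: Xg_def)
    then obtain j where j: "1 \<le> j" "j \<notin> J" "Suc j \<in> J"
      using not_initial_segment_gap[OF fin _ False] by blast
    define J' where "J' = insert j (J - {Suc j})"
    have J': "J' \<subseteq> Xg g" "card J' = card J" "\<Sum>J = Suc (\<Sum>J')"
      using less.prems fin j sum.remove[OF fin j(3), of id] card_gt_0_iff[of J]
      by (auto simp: J'_def Xg_def card_insert_if card_Suc_Diff1)
    have "sign (shuffle_perm g J) = sign (transpose j (Suc j)) * sign (shuffle_perm g J')"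
      unfolding shuffle_perm_transpose_gap[OF less.prems j(2,3,1), folded J'_def]
      by (intro sign_compose permutation_swap_id permutes_imp_permutation[OF _ shuffle_perm_permutes[OF J'(1)]])
        (simp add: Xg_def)
    also have "\<dots> = - sign (shuffle_perm g J')" by (simp add: sign_swap_id)
    also have "\<dots> = (-1) ^ (\<Sum>J + \<Sum>{1..card J})"
      using less.hyps[of J'] J' by simp
    finally show ?thesis .
  qed
qed

lemma eps_mult_eps:
  assumes "I \<subseteq> Xg g" "J \<subseteq> Xg g" "card I = card J"
  shows "eps g I * eps g J = (-1) ^ (\<Sum>I + \<Sum>J)"
proof -
  have "eps g I * eps g J = (-1) ^ (\<Sum>I + \<Sum>J + 2 * \<Sum>{1..card J})"
    using assms by (simp add: eps_eq_sign_shuffle_perm sign_shuffle_perm power_add algebra_simps)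
  then show ?thesis by (simp add: power_add power_mult)
qed

theorem lemma2p3:
  fixes g k :: nat and v :: "nat \<Rightarrow> nat \<Rightarrow> complex"
  assumes "1 \<le> k" and "k < g"
  shows "\<forall>I\<in>Pk (g - k) (Xg g). \<forall>J\<in>Pk (g - k) (Xg g).
           star_prod g (\<lambda>i a b. v i a * v i b) k I J
             = inverse (of_nat (fact k)) * wvec g v k I * wvec g v k J"
proof (intro ballI)
  fix I J assume "I \<in> Pk (g - k) (Xg g)" "J \<in> Pk (g - k) (Xg g)"
  then have sub: "I \<subseteq> Xg g" "J \<subseteq> Xg g" and card: "card I = g - k" "card J = g - k"
    by (auto simp: Pk_def)
  have "card (Xg g - I) = Suc (k - 1)" "card (Xg g - J) = Suc (k - 1)"
    using sub card assms by (simp_all add: Xg_def card_Diff_subset finite_subset)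
  from iter_sqcap_rank_one[OF this, of v v] assms
  have rank_one: "iter_sqcap (\<lambda>i a b. v i a * v i b) k (Xg g - I) (Xg g - J)
      = inverse (of_nat (fact k)) * det (subA v k (Xg g - I)) * det (subA v k (Xg g - J))"
    by simp
  have "of_int (eps g I * eps g J) = (of_int ((-1) ^ (\<Sum>I + \<Sum>J)) :: complex)"
    using eps_mult_eps[OF sub] card by simp
  then show "star_prod g (\<lambda>i a b. v i a * v i b) k I J
      = inverse (of_nat (fact k)) * wvec g v k I * wvec g v k J"
    unfolding star_prod_def wvec_def rank_one by (simp add: algebra_simps)
qed

end
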